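(* Let $V$ be an $n$-dimensional complex vector space, $V^*$ its dual, $\Lambda_2(V)$ the second antisymmetric tensor of $V$ and $S_2(V^* )$ the second symmetric tensor of $V^*$. Then the algebra of $GL(V)$-invariants in the exterior algebra $\Lambda(\Lambda_2(V)\oplus S_2(V^* ))$ is trivial: $\Lambda(\Lambda_2(V)\oplus S_2(V^* ))^{GL(V)}=\mathbb{C}1$.
   Context: $GL(V)$ acts naturally on $\Lambda_2(V)\oplus S_2(V^* )$ and hence on the exterior algebra $\Lambda(\Lambda_2(V)\oplus S_2(V^* ))$ by algebra automorphisms. *)

theory Defs
  imports "HOL-Analysis.Analysis"
begin

text \<open>
  V = complex^'n (dimension n = CARD('n)), with standard basis e_i and dual basis f_i of V*.
  W = Lambda_2(V) (+) S_2(V*) is realised inside (V (x) V) (+) (V* (x) V*):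
  a tensor index of W is  Inl (i,j)  (coordinate of e_i (x) e_j, antisymmetric in (i,j))
  or  Inr (i,j)  (coordinate of f_i (x) f_j, symmetric in (i,j)).
\<close>

type_synonym 'n widx = "('n \<times> 'n) + ('n \<times> 'n)"

text \<open>Matrix coefficients of the natural action of g in GL(V) on (V (x) V) (+) (V* (x) V*):
  g acts on V by g and on V* by the contragredient transpose (g^-1).\<close>
definition rhoW :: "complex^'n^'n \<Rightarrow> 'n widx \<Rightarrow> 'n widx \<Rightarrow> complex" where
  "rhoW g b c = (case (b, c) of
      (Inl (i, j), Inl (k, l)) \<Rightarrow> g $ i $ k * g $ j $ l
    | (Inr (i, j), Inr (k, l)) \<Rightarrow>
        transpose (matrix_inv g) $ i $ k * transpose (matrix_inv g) $ j $ l
    | _ \<Rightarrow> 0)"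

fun flipW :: "'n widx \<Rightarrow> 'n widx" where
  "flipW (Inl (i, j)) = Inl (j, i)"
| "flipW (Inr (i, j)) = Inr (j, i)"

fun flipsign :: "'n widx \<Rightarrow> complex" where
  "flipsign (Inl _) = -1"
| "flipsign (Inr _) = 1"

text \<open>
  An element of the exterior algebra Lambda(W), realised (char 0) as the space of alternating
  tensors in the tensor algebra  (+)_k W^(x)k.  It is given by its coordinate function
  x :: 'n widx list => complex; the degree-k component is x restricted to lists of length k.
  Conditions: each slot lies in W (antisymmetric on Lambda_2(V)-slots, symmetric on
  S_2(V*)-slots), and x is alternating in the slots.
\<close>
definition ext_alg_elem :: "('n widx list \<Rightarrow> complex) \<Rightarrow> bool" where
  "ext_alg_elem x \<longleftrightarrow>
     (\<forall>xs b ys. x (xs @ [flipW b] @ ys) = flipsign b * x (xs @ [b] @ ys)) \<and>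
     (\<forall>xs b c ys. x (xs @ [b, c] @ ys) = - x (xs @ [c, b] @ ys))"

definition ext_act :: "complex^'n^'n \<Rightarrow> ('n widx list \<Rightarrow> complex) \<Rightarrow> ('n widx list \<Rightarrow> complex)" where
  "ext_act g x = (\<lambda>bs. \<Sum>cs \<in> {cs. length cs = length bs}.
      (\<Prod>m<length bs. rhoW g (bs ! m) (cs ! m)) * x cs)"

definition ext_one :: "'n widx list \<Rightarrow> complex" where
  "ext_one = (\<lambda>bs. if bs = [] then 1 else 0)"

end

theory Submission
  imports Defs
begin

(* An invariant x is annihilated by gl(V): differentiating its invariance under the curve
   t \<mapsto> 1 + t E_ab at t = 0 shows that E_ab acting on the \<Lambda>_2(V)-slots of x cancels
   E_ab acting on the S_2(V\<^sup>\<star>)-slots. Setting a = b and summing over a compares Euler operators: a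
   nonzero coordinate x bs with p \<Lambda>_2(V)-slots and q S_2(V\<^sup>\<star>)-slots has p = q. Operators on
   slots of different kinds commute, so the Casimir operators \<Sum> E_ab E_ba of the two kinds agree
   on x as well, and by alternation they act on x bs as the scalars 2p(n - 1) and 2q(n + 1).
   Hence p(n - 1) = p(n + 1), so p = q = 0 and x is concentrated in degree 0. *)

lemma matrix_inv_unique:
  fixes A B :: "'a::semiring_1^'n^'n"
  assumes "A ** B = mat 1" "B ** A = mat 1"
  shows "matrix_inv A = B"
proof -
  have inv: "A ** matrix_inv A = mat 1 \<and> matrix_inv A ** A = mat 1"
    unfolding matrix_inv_def by (rule someI_ex) (use assms in blast)
  have "matrix_inv A = matrix_inv A ** (A ** B)" using assms(1) by (simp add: matrix_mul_rid)
  also have "\<dots> = (matrix_inv A ** A) ** B" by (simp add: matrix_mul_assoc)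
  finally show ?thesis using inv by (simp add: matrix_mul_lid)
qed

lemma sum_sum_if_eq:
  fixes H :: "'a::finite \<Rightarrow> 'b \<Rightarrow> 'c::comm_monoid_add"
  shows "(\<Sum>a\<in>UNIV. \<Sum>b\<in>B. if Q \<and> c = a then H a b else 0) = (if Q then \<Sum>b\<in>B. H c b else 0)"
proof -
  have "(\<Sum>a\<in>UNIV. \<Sum>b\<in>B. if Q \<and> c = a then H a b else 0) =
      (\<Sum>a\<in>UNIV. if c = a then (if Q then \<Sum>b\<in>B. H a b else 0) else 0)"
    by (intro sum.cong) auto
  then show ?thesis by simp
qed

fun wedge_idx :: "'n widx \<Rightarrow> bool" where
  "wedge_idx (Inl _) = True"
| "wedge_idx (Inr _) = False"

fun widx_comp :: "'n widx \<Rightarrow> bool \<Rightarrow> 'n" where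
  "widx_comp (Inl (i, j)) s = (if s then j else i)"
| "widx_comp (Inr (i, j)) s = (if s then j else i)"

fun widx_upd :: "'n widx \<Rightarrow> bool \<Rightarrow> 'n \<Rightarrow> 'n widx" where
  "widx_upd (Inl (i, j)) s v = (if s then Inl (i, v) else Inl (v, j))"
| "widx_upd (Inr (i, j)) s v = (if s then Inr (i, v) else Inr (v, j))"

lemma wedge_idx_widx_upd [simp]: "wedge_idx (widx_upd w s v) = wedge_idx w"
  by (cases w) (auto split: if_splits)

lemma widx_upd_widx_comp [simp]: "widx_upd w s (widx_comp w s) = w"
  by (cases w) (auto split: if_splits)

lemma widx_upd_widx_upd [simp]: "widx_upd (widx_upd w s b) s c = widx_upd w s c"
  by (cases w) (auto split: if_splits)

lemma widx_comp_widx_upd: "widx_comp (widx_upd w s b) s' = (if s' = s then b else widx_comp w s')"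
  by (cases w) (auto split: if_splits)

lemma widx_upd_exchange_comps:
  "s' \<noteq> s \<Longrightarrow> widx_upd (widx_upd w s (widx_comp w s')) s' (widx_comp w s) = flipW w"
  by (cases w) (auto split: if_splits)

lemma flipsign_eq: "flipsign w = (if wedge_idx w then -1 else 1)"
  by (cases w) auto

lemma ext_alg_elem_flip_update:
  assumes "ext_alg_elem y" "m < length bs"
  shows "y (bs[m := flipW c]) = flipsign c * y (bs[m := c])"
  using assms unfolding ext_alg_elem_def by (metis append_Cons append_Nil upd_conv_take_nth_drop)

lemma ext_alg_elem_swap_apart:
  assumes "ext_alg_elem y"
  shows "y (xs @ [b] @ ms @ [c] @ ys) = - y (xs @ [c] @ ms @ [b] @ ys)"
proof (induction ms arbitrary: xs)
  case Nil
  have "y (xs @ [b, c] @ ys) = - y (xs @ [c, b] @ ys)"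
    using assms unfolding ext_alg_elem_def by blast
  then show ?case by simp
next
  case (Cons m ms)
  have swap: "\<And>xs b c ys. y (xs @ [b, c] @ ys) = - y (xs @ [c, b] @ ys)"
    using assms unfolding ext_alg_elem_def by blast
  have "y (xs @ [b] @ (m # ms) @ [c] @ ys) = - y ((xs @ [m]) @ [b] @ ms @ [c] @ ys)"
    using swap[of xs b m "ms @ [c] @ ys"] by simp
  also have "\<dots> = y ((xs @ [m]) @ [c] @ ms @ [b] @ ys)"
    unfolding Cons[of "xs @ [m]"] by simp
  also have "\<dots> = - y (xs @ [c] @ (m # ms) @ [b] @ ys)"
    using swap[of xs m c "ms @ [b] @ ys"] by simp
  finally show ?case .
qed

lemma ext_alg_elem_swap_update:
  assumes "ext_alg_elem y" "m \<noteq> m'" "m < length bs" "m' < length bs"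
  shows "y (bs[m := c, m' := d]) = - y (bs[m := d, m' := c])"
proof -
  have ordered: "y (bs[p := u, q := v]) = - y (bs[p := v, q := u])"
    if "p < q" "q < length bs" for p q u v
  proof -
    have split: "bs[p := u', q := v'] =
        take p bs @ [u'] @ take (q - p - 1) (drop (Suc p) bs) @ [v'] @ drop (Suc q) bs" for u' v'
      using that by (auto simp: list_eq_iff_nth_eq nth_append nth_list_update min_def)
    show ?thesis unfolding split by (rule ext_alg_elem_swap_apart[OF assms(1)])
  qed
  show ?thesis
  proof (cases "m < m'")
    case True
    then show ?thesis using ordered assms(4) by blast
  next
    case False
    then have "m' < m" using assms(2) by simp
    then show ?thesis using ordered[of m' m d c] assms(2,3) by (simp add: list_update_swap)
  qed
qed

(* Of the four terms, two cancel by alternation; the other two cancel after flipping both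
   slots, which costs the sign flipsign^2 = 1 since the slots have the same kind. *)
lemma ext_alg_elem_exchange_sum:
  assumes y: "ext_alg_elem y" and mm: "m \<noteq> m'" "m < length bs" "m' < length bs"
    and same_kind: "wedge_idx (bs!m) = wedge_idx (bs!m')"
  shows "(\<Sum>s\<in>UNIV. \<Sum>s'\<in>UNIV. y (bs[m := widx_upd (bs!m) s (widx_comp (bs!m') s'),
            m' := widx_upd (bs!m') s' (widx_comp (bs!m) s)])) = 0"
proof -
  have swap: "y (bs[m := c, m' := d]) = - y (bs[m := d, m' := c])" for c d
    using ext_alg_elem_swap_update[OF y mm] .
  have flip: "y (bs[m := flipW c, m' := flipW d]) = flipsign c * flipsign d * y (bs[m := c, m' := d])"
    for c d
  proof -
    have "y (bs[m := flipW c, m' := flipW d]) = y ((bs[m' := flipW d])[m := flipW c])"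
      using mm(1) by (simp add: list_update_swap)
    also have "\<dots> = flipsign c * y ((bs[m := c])[m' := flipW d])"
      using ext_alg_elem_flip_update[OF y] mm by (simp add: list_update_swap)
    also have "\<dots> = flipsign c * flipsign d * y (bs[m := c, m' := d])"
      using ext_alg_elem_flip_update[OF y] mm by simp
    finally show ?thesis .
  qed
  consider (wedge) i j k l where "bs!m = Inl (i, j)" "bs!m' = Inl (k, l)"
    | (sym) i j k l where "bs!m = Inr (i, j)" "bs!m' = Inr (k, l)"
    using same_kind by (cases "bs!m"; cases "bs!m'") auto
  then show ?thesis
  proof cases
    case (wedge i j k l)
    have "y (bs[m := Inl (l, j), m' := Inl (k, i)]) = y (bs[m := Inl (j, l), m' := Inl (i, k)])"
      using flip[of "Inl (j, l)" "Inl (i, k)"] by simp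
    then show ?thesis using wedge by (simp add: UNIV_bool swap[of "Inl (i, l)"] swap[of "Inl (j, l)"])
  next
    case (sym i j k l)
    have "y (bs[m := Inr (l, j), m' := Inr (k, i)]) = y (bs[m := Inr (j, l), m' := Inr (i, k)])"
      using flip[of "Inr (j, l)" "Inr (i, k)"] by simp
    then show ?thesis using sym by (simp add: UNIV_bool swap[of "Inr (i, l)"] swap[of "Inr (j, l)"])
  qed
qed

section \<open>Polarization operators\<close>

(* The derivative of ext_act (1 + t E_ab) x at t = 0 is
   polar_op True a b x - polar_op False b a x (see invariant_polar_op_balance). *)
definition polar_op :: "bool \<Rightarrow> 'n \<Rightarrow> 'n \<Rightarrow> ('n widx list \<Rightarrow> complex) \<Rightarrow> 'n widx list \<Rightarrow> complex"
  where "polar_op k a b y bs = (\<Sum>m<length bs. \<Sum>s\<in>UNIV.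
    if wedge_idx (bs!m) = k \<and> widx_comp (bs!m) s = a then y (bs[m := widx_upd (bs!m) s b]) else 0)"

definition slot_count :: "bool \<Rightarrow> 'n widx list \<Rightarrow> nat"
  where "slot_count k bs = card {m. m < length bs \<and> wedge_idx (bs!m) = k}"

lemma sum_slots_of_kind:
  fixes c :: "'a::semiring_1"
  shows "(\<Sum>m<length bs. if wedge_idx (bs!m) = k then c else 0) = of_nat (slot_count k bs) * c"
proof -
  have "{m. m < length bs \<and> wedge_idx (bs!m) = k} = {m \<in> {..<length bs}. wedge_idx (bs!m) = k}"
    by auto
  then show ?thesis unfolding slot_count_def by (simp add: sum.inter_filter[symmetric])
qed

lemma slot_count_total: "slot_count True bs + slot_count False bs = length bs"
proof -
  have "length bs = card ({m. m < length bs \<and> wedge_idx (bs!m) = True}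
      \<union> {m. m < length bs \<and> wedge_idx (bs!m) = False})"
    by (subst card_lessThan[symmetric], rule arg_cong[where f = card]) auto
  also have "\<dots> = slot_count True bs + slot_count False bs"
    unfolding slot_count_def by (rule card_Un_disjoint) auto
  finally show ?thesis by simp
qed

lemma polar_op_trace:
  fixes bs :: "'n::finite widx list"
  shows "(\<Sum>a\<in>UNIV. polar_op k a a y bs) = 2 * of_nat (slot_count k bs) * y bs"
proof -
  have "(\<Sum>a\<in>UNIV. polar_op k a a y bs) = (\<Sum>m<length bs. \<Sum>s\<in>UNIV. \<Sum>a\<in>UNIV.
      if widx_comp (bs!m) s = a then (if wedge_idx (bs!m) = k then y bs else 0) else 0)"
    unfolding polar_op_def by (subst sum.swap, intro sum.cong refl, subst sum.swap) (auto intro!: sum.cong)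
  also have "\<dots> = (\<Sum>m<length bs. if wedge_idx (bs!m) = k then 2 * y bs else 0)"
    by (intro sum.cong refl) (simp add: UNIV_bool)
  finally show ?thesis by (simp add: sum_slots_of_kind)
qed

lemma polar_op_polar_op_expand:
  assumes "k \<noteq> k'"
  shows "polar_op k a b (polar_op k' c d y) bs =
    (\<Sum>m<length bs. \<Sum>s\<in>UNIV. \<Sum>m'<length bs. \<Sum>s'\<in>UNIV.
      if wedge_idx (bs!m) = k \<and> widx_comp (bs!m) s = a \<and> wedge_idx (bs!m') = k' \<and> widx_comp (bs!m') s' = c
      then y (bs[m := widx_upd (bs!m) s b, m' := widx_upd (bs!m') s' d]) else 0)"
  unfolding polar_op_def[of k]
proof (intro sum.cong refl)
  fix m s assume m: "m \<in> {..<length bs}"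
  have "polar_op k' c d y (bs[m := widx_upd (bs!m) s b]) =
    (\<Sum>m'<length bs. \<Sum>s'\<in>UNIV. if wedge_idx (bs!m') = k' \<and> widx_comp (bs!m') s' = c
      then y (bs[m := widx_upd (bs!m) s b, m' := widx_upd (bs!m') s' d]) else 0)"
    if "wedge_idx (bs!m) = k"
    unfolding polar_op_def length_list_update
  proof (intro sum.cong refl)
    fix m' s'
    show "(if wedge_idx (bs[m := widx_upd (bs!m) s b] ! m') = k'
          \<and> widx_comp (bs[m := widx_upd (bs!m) s b] ! m') s' = c
        then y (bs[m := widx_upd (bs!m) s b, m' := widx_upd (bs[m := widx_upd (bs!m) s b] ! m') s' d])
        else 0) =
      (if wedge_idx (bs!m') = k' \<and> widx_comp (bs!m') s' = c
        then y (bs[m := widx_upd (bs!m) s b, m' := widx_upd (bs!m') s' d]) else 0)"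
      using m that assms by (cases "m' = m") auto
  qed
  then show "(if wedge_idx (bs!m) = k \<and> widx_comp (bs!m) s = a
      then polar_op k' c d y (bs[m := widx_upd (bs!m) s b]) else 0) =
    (\<Sum>m'<length bs. \<Sum>s'\<in>UNIV.
      if wedge_idx (bs!m) = k \<and> widx_comp (bs!m) s = a \<and> wedge_idx (bs!m') = k' \<and> widx_comp (bs!m') s' = c
      then y (bs[m := widx_upd (bs!m) s b, m' := widx_upd (bs!m') s' d]) else 0)"
    by (auto intro!: sum.neutral)
qed

lemma polar_op_commute:
  assumes "k \<noteq> k'"
  shows "polar_op k a b (polar_op k' c d y) bs = polar_op k' c d (polar_op k a b y) bs"
proof -
  define F where "F m s m' s' = (if wedge_idx (bs!m) = k \<and> widx_comp (bs!m) s = a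
      \<and> wedge_idx (bs!m') = k' \<and> widx_comp (bs!m') s' = c
    then y (bs[m := widx_upd (bs!m) s b, m' := widx_upd (bs!m') s' d]) else 0)" for m s m' s'
  have swap: "(if wedge_idx (bs!m') = k' \<and> widx_comp (bs!m') s' = c \<and> wedge_idx (bs!m) = k \<and> widx_comp (bs!m) s = a
      then y (bs[m' := widx_upd (bs!m') s' d, m := widx_upd (bs!m) s b]) else 0) = F m s m' s'" for m s m' s'
  proof (cases "wedge_idx (bs!m) = k \<and> wedge_idx (bs!m') = k'")
    case True
    with assms have "m \<noteq> m'" by auto
    then show ?thesis by (auto simp: F_def list_update_swap)
  qed (auto simp: F_def)
  have "polar_op k' c d (polar_op k a b y) bs =
      (\<Sum>m'<length bs. \<Sum>s'\<in>UNIV. \<Sum>m<length bs. \<Sum>s\<in>UNIV. F m s m' s')"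
    by (simp only: polar_op_polar_op_expand[OF assms[symmetric]] swap)
  also have "\<dots> = (\<Sum>m'<length bs. \<Sum>m<length bs. \<Sum>s'\<in>UNIV. \<Sum>s\<in>UNIV. F m s m' s')"
    by (rule sum.cong[OF refl], rule sum.swap)
  also have "\<dots> = (\<Sum>m<length bs. \<Sum>m'<length bs. \<Sum>s\<in>UNIV. \<Sum>s'\<in>UNIV. F m s m' s')"
    by (subst sum.swap) (rule sum.cong[OF refl], rule sum.cong[OF refl], rule sum.swap)
  also have "\<dots> = (\<Sum>m<length bs. \<Sum>s\<in>UNIV. \<Sum>m'<length bs. \<Sum>s'\<in>UNIV. F m s m' s')"
    by (rule sum.cong[OF refl], rule sum.swap)
  finally show ?thesis unfolding polar_op_polar_op_expand[OF assms] F_def by simp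
qed

(* The terms acting twice on slot m give n (same index position) or the flip sign (other
   position); the remaining terms exchange one index between slot m and another slot m'. *)
lemma polar_op_casimir_slot_expand:
  fixes bs :: "'n::finite widx list"
  assumes y: "ext_alg_elem y" and m: "m < length bs" "wedge_idx (bs!m) = k"
  shows "(\<Sum>b\<in>UNIV. polar_op k b (widx_comp (bs!m) s) y (bs[m := widx_upd (bs!m) s b])) =
    (\<Sum>s'\<in>UNIV. if s' = s then of_nat CARD('n) * y bs else flipsign (bs!m) * y bs) +
    (\<Sum>m'\<in>{..<length bs} - {m}. \<Sum>s'\<in>UNIV. if wedge_idx (bs!m') = k
      then y (bs[m := widx_upd (bs!m) s (widx_comp (bs!m') s'), m' := widx_upd (bs!m') s' (widx_comp (bs!m) s)])
      else 0)"
proof -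
  define T where "T m' s' b = (if wedge_idx (bs[m := widx_upd (bs!m) s b] ! m') = k
      \<and> widx_comp (bs[m := widx_upd (bs!m) s b] ! m') s' = b
    then y (bs[m := widx_upd (bs!m) s b,
      m' := widx_upd (bs[m := widx_upd (bs!m) s b] ! m') s' (widx_comp (bs!m) s)]) else 0)" for m' s' b
  have diag: "(\<Sum>b\<in>UNIV. T m s' b) = (if s' = s then of_nat CARD('n) * y bs else flipsign (bs!m) * y bs)"
    for s'
  proof (cases "s' = s")
    case True
    then show ?thesis using m by (simp add: T_def widx_comp_widx_upd)
  next
    case False
    then have "(\<Sum>b\<in>UNIV. T m s' b) = y (bs[m := flipW (bs!m)])"
      using m by (simp add: T_def widx_comp_widx_upd widx_upd_exchange_comps)
    also have "\<dots> = flipsign (bs!m) * y bs"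
      using ext_alg_elem_flip_update[OF y m(1), of "bs!m"] by simp
    finally show ?thesis using False by simp
  qed
  have off_diag: "(\<Sum>b\<in>UNIV. T m' s' b) = (if wedge_idx (bs!m') = k
      then y (bs[m := widx_upd (bs!m) s (widx_comp (bs!m') s'), m' := widx_upd (bs!m') s' (widx_comp (bs!m) s)])
      else 0)" if "m' \<noteq> m" for m' s'
    using that by (simp add: T_def)
  have "(\<Sum>b\<in>UNIV. polar_op k b (widx_comp (bs!m) s) y (bs[m := widx_upd (bs!m) s b])) =
      (\<Sum>m'<length bs. \<Sum>s'\<in>UNIV. \<Sum>b\<in>UNIV. T m' s' b)"
    unfolding polar_op_def T_def length_list_update
    by (simp add: sum.swap[of _ UNIV "{..<length bs}"] sum.swap[of _ UNIV "UNIV::bool set"])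
  also have "\<dots> = (\<Sum>s'\<in>UNIV. \<Sum>b\<in>UNIV. T m s' b) +
      (\<Sum>m'\<in>{..<length bs} - {m}. \<Sum>s'\<in>UNIV. \<Sum>b\<in>UNIV. T m' s' b)"
    by (rule sum.remove) (use m(1) in auto)
  also have "\<dots> = (\<Sum>s'\<in>UNIV. if s' = s then of_nat CARD('n) * y bs else flipsign (bs!m) * y bs) +
    (\<Sum>m'\<in>{..<length bs} - {m}. \<Sum>s'\<in>UNIV. if wedge_idx (bs!m') = k
      then y (bs[m := widx_upd (bs!m) s (widx_comp (bs!m') s'), m' := widx_upd (bs!m') s' (widx_comp (bs!m) s)])
      else 0)"
    using diag off_diag by (intro arg_cong2[where f = "(+)"] sum.cong refl) auto
  finally show ?thesis .
qed

lemma polar_op_casimir_slot: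
  fixes bs :: "'n::finite widx list"
  assumes y: "ext_alg_elem y" and m: "m < length bs" "wedge_idx (bs!m) = k"
  shows "(\<Sum>s\<in>UNIV. \<Sum>b\<in>UNIV. polar_op k b (widx_comp (bs!m) s) y (bs[m := widx_upd (bs!m) s b])) =
    2 * (of_nat CARD('n) + flipsign (bs!m)) * y bs"
proof -
  have cross_slot: "(\<Sum>s\<in>UNIV. \<Sum>s'\<in>UNIV. if wedge_idx (bs!m') = k
      then y (bs[m := widx_upd (bs!m) s (widx_comp (bs!m') s'), m' := widx_upd (bs!m') s' (widx_comp (bs!m) s)])
      else 0) = 0" if "m' \<in> {..<length bs} - {m}" for m'
  proof (cases "wedge_idx (bs!m') = k")
    case True
    with that m have "m \<noteq> m'" "m' < length bs" "wedge_idx (bs!m) = wedge_idx (bs!m')" by auto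
    from ext_alg_elem_exchange_sum[OF y this(1) m(1) this(2,3)] True show ?thesis by simp
  qed simp
  have cross: "(\<Sum>s\<in>UNIV. \<Sum>m'\<in>{..<length bs} - {m}. \<Sum>s'\<in>UNIV. if wedge_idx (bs!m') = k
      then y (bs[m := widx_upd (bs!m) s (widx_comp (bs!m') s'), m' := widx_upd (bs!m') s' (widx_comp (bs!m) s)])
      else 0) = 0"
    by (subst sum.swap) (simp add: cross_slot)
  have diag: "(\<Sum>s'\<in>UNIV. if s' = s then of_nat CARD('n) * y bs else flipsign (bs!m) * y bs) =
      (of_nat CARD('n) + flipsign (bs!m)) * y bs" for s :: bool
    by (cases s) (simp_all add: UNIV_bool algebra_simps)
  show ?thesis
    unfolding polar_op_casimir_slot_expand[OF y m] sum.distrib cross diag by (simp add: UNIV_bool)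
qed

lemma polar_op_casimir:
  fixes bs :: "'n::finite widx list"
  assumes "ext_alg_elem y"
  shows "(\<Sum>a\<in>UNIV. \<Sum>b\<in>UNIV. polar_op k a b (polar_op k b a y) bs) =
    2 * of_nat (slot_count k bs) * (of_nat CARD('n) + (if k then -1 else 1)) * y bs"
proof -
  have "(\<Sum>a\<in>UNIV. \<Sum>b\<in>UNIV. polar_op k a b (polar_op k b a y) bs) =
      (\<Sum>m<length bs. \<Sum>s\<in>UNIV. \<Sum>a\<in>UNIV. \<Sum>b\<in>UNIV. if wedge_idx (bs!m) = k \<and> widx_comp (bs!m) s = a
        then polar_op k b a y (bs[m := widx_upd (bs!m) s b]) else 0)"
    unfolding polar_op_def[of k _ _ "polar_op k _ _ y"]
    by (simp add: sum.swap[of _ UNIV "{..<length bs}"] sum.swap[of _ UNIV "UNIV::bool set"])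
  also have "\<dots> = (\<Sum>m<length bs. if wedge_idx (bs!m) = k then \<Sum>s\<in>UNIV. \<Sum>b\<in>UNIV.
      polar_op k b (widx_comp (bs!m) s) y (bs[m := widx_upd (bs!m) s b]) else 0)"
    by (simp only: sum_sum_if_eq) (intro sum.cong refl, auto)
  also have "\<dots> = (\<Sum>m<length bs. if wedge_idx (bs!m) = k
      then 2 * (of_nat CARD('n) + (if k then -1 else 1)) * y bs else 0)"
    by (intro sum.cong refl) (simp add: polar_op_casimir_slot[OF assms] flipsign_eq)
  finally show ?thesis unfolding sum_slots_of_kind by (simp only: mult_ac)
qed

section \<open>Infinitesimal invariance\<close>

definition elem_entry :: "'n \<Rightarrow> 'n \<Rightarrow> complex \<Rightarrow> 'n \<Rightarrow> 'n \<Rightarrow> complex"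
  where "elem_entry a b t i k = (if i = k then 1 else 0) + t * (if i = a \<and> k = b then 1 else 0)"

definition elem_curve :: "'n::finite \<Rightarrow> 'n \<Rightarrow> complex \<Rightarrow> complex^'n^'n"
  where "elem_curve a b t = (\<chi> i k. elem_entry a b t i k)"

definition elem_inv_param :: "'n \<Rightarrow> 'n \<Rightarrow> complex \<Rightarrow> complex"
  where "elem_inv_param a b t = (if a = b then - t / (1 + t) else - t)"

lemma elem_curve_mult:
  "elem_curve a b t ** elem_curve a b u = elem_curve a b (t + u + (if a = b then t * u else 0))"
  by (simp add: vec_eq_iff elem_curve_def elem_entry_def matrix_matrix_mult_def algebra_simps sum.distrib
      if_distrib[of "\<lambda>x. x * _"] if_distrib[of "\<lambda>x. _ * x"] cong: if_cong)

lemma elem_curve_0: "elem_curve a b 0 = mat 1"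
  by (simp add: vec_eq_iff elem_curve_def elem_entry_def mat_def)

lemma elem_inv_param_cancel:
  assumes "t \<noteq> -1"
  shows "t + elem_inv_param a b t + (if a = b then t * elem_inv_param a b t else 0) = 0"
proof -
  have "1 + t \<noteq> 0" using assms by (metis add_eq_0_iff)
  then have "- t / (1 + t) + t * (- t / (1 + t)) = - t * (1 + t) / (1 + t)"
    by (simp add: add_divide_distrib[symmetric] algebra_simps)
  also have "\<dots> = - t" using \<open>1 + t \<noteq> 0\<close> by simp
  finally show ?thesis by (auto simp: elem_inv_param_def algebra_simps)
qed

lemma elem_curve_inverse:
  assumes "t \<noteq> -1"
  shows "elem_curve a b t ** elem_curve a b (elem_inv_param a b t) = mat 1"
    and "elem_curve a b (elem_inv_param a b t) ** elem_curve a b t = mat 1"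
proof -
  let ?u = "elem_inv_param a b t"
  have "t + ?u + (if a = b then t * ?u else 0) = 0"
    by (rule elem_inv_param_cancel[OF assms])
  moreover have "?u + t + (if a = b then ?u * t else 0) = t + ?u + (if a = b then t * ?u else 0)"
    by (simp only: add.commute[of ?u t] mult.commute[of ?u t])
  ultimately show "elem_curve a b t ** elem_curve a b ?u = mat 1" "elem_curve a b ?u ** elem_curve a b t = mat 1"
    by (simp_all only: elem_curve_mult elem_curve_0)
qed

lemma invertible_elem_curve: "t \<noteq> -1 \<Longrightarrow> invertible (elem_curve a b t)"
  unfolding invertible_def using elem_curve_inverse by blast

lemma matrix_inv_elem_curve:
  "t \<noteq> -1 \<Longrightarrow> matrix_inv (elem_curve a b t) = elem_curve a b (elem_inv_param a b t)"
  by (intro matrix_inv_unique elem_curve_inverse)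

(* rhoW along the curve, with matrix_inv eliminated so that it can be differentiated. *)
definition curve_rho :: "'n \<Rightarrow> 'n \<Rightarrow> complex \<Rightarrow> 'n widx \<Rightarrow> 'n widx \<Rightarrow> complex"
  where "curve_rho a b t w c = (case (w, c) of
      (Inl (i, j), Inl (k, l)) \<Rightarrow> elem_entry a b t i k * elem_entry a b t j l
    | (Inr (i, j), Inr (k, l)) \<Rightarrow>
        elem_entry a b (elem_inv_param a b t) k i * elem_entry a b (elem_inv_param a b t) l j
    | _ \<Rightarrow> 0)"

lemma rhoW_elem_curve: "t \<noteq> -1 \<Longrightarrow> rhoW (elem_curve a b t) w c = curve_rho a b t w c"
  unfolding rhoW_def curve_rho_def matrix_inv_elem_curve[of t]
  by (simp add: elem_curve_def transpose_def split: sum.splits prod.splits)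

lemma curve_rho_0: "curve_rho a b 0 w c = (if w = c then 1 else 0)"
  by (auto simp: curve_rho_def elem_entry_def elem_inv_param_def split: sum.splits prod.splits)

definition rho_deriv :: "'n \<Rightarrow> 'n \<Rightarrow> 'n widx \<Rightarrow> 'n widx \<Rightarrow> complex"
  where "rho_deriv a b w c =
    (\<Sum>s\<in>UNIV. if wedge_idx w \<and> widx_comp w s = a \<and> c = widx_upd w s b then 1 else 0) -
    (\<Sum>s\<in>UNIV. if \<not> wedge_idx w \<and> widx_comp w s = b \<and> c = widx_upd w s a then 1 else 0)"

lemma elem_inv_param_deriv: "(elem_inv_param a b has_field_derivative -1) (at 0)"
proof (cases "a = b")
  case True
  have "((\<lambda>t. - t / (1 + t)) has_field_derivative -1) (at (0::complex))"
    by (auto intro!: derivative_eq_intros)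
  then show ?thesis using True unfolding elem_inv_param_def by simp
next
  case False
  then show ?thesis unfolding elem_inv_param_def by (auto intro!: derivative_eq_intros)
qed

lemma elem_entry_deriv:
  "((\<lambda>t. elem_entry a b t i k) has_field_derivative (if i = a \<and> k = b then 1 else 0)) (at 0)"
  unfolding elem_entry_def by (auto intro!: derivative_eq_intros)

lemma elem_entry_inv_param_deriv:
  "((\<lambda>t. elem_entry a b (elem_inv_param a b t) i k) has_field_derivative
     - (if i = a \<and> k = b then 1 else 0)) (at 0)"
  unfolding elem_entry_def by (auto intro!: derivative_eq_intros elem_inv_param_deriv)

lemma curve_rho_deriv: "((\<lambda>t. curve_rho a b t w c) has_field_derivative rho_deriv a b w c) (at 0)"
proof -
  consider (wedge) i j k l where "w = Inl (i, j)" "c = Inl (k, l)"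
    | (sym) i j k l where "w = Inr (i, j)" "c = Inr (k, l)"
    | (mixed) "wedge_idx w \<noteq> wedge_idx c"
    by (cases w; cases c) auto
  then show ?thesis
  proof cases
    case (wedge i j k l)
    have "((\<lambda>t. elem_entry a b t i k * elem_entry a b t j l) has_field_derivative
        (if i = a \<and> k = b then 1 else 0) * elem_entry a b 0 j l
        + (if j = a \<and> l = b then 1 else 0) * elem_entry a b 0 i k) (at 0)"
      by (rule DERIV_mult[OF elem_entry_deriv elem_entry_deriv])
    moreover have "(if i = a \<and> k = b then 1 else 0) * elem_entry a b 0 j l
        + (if j = a \<and> l = b then 1 else 0) * elem_entry a b 0 i k = rho_deriv a b w c"
      by (auto simp: wedge rho_deriv_def elem_entry_def UNIV_bool)
    ultimately show ?thesis by (simp add: wedge curve_rho_def)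
  next
    case (sym i j k l)
    have "((\<lambda>t. elem_entry a b (elem_inv_param a b t) k i * elem_entry a b (elem_inv_param a b t) l j)
        has_field_derivative
        - (if k = a \<and> i = b then 1 else 0) * elem_entry a b (elem_inv_param a b 0) l j
        + - (if l = a \<and> j = b then 1 else 0) * elem_entry a b (elem_inv_param a b 0) k i) (at 0)"
      by (rule DERIV_mult[OF elem_entry_inv_param_deriv elem_entry_inv_param_deriv])
    moreover have "- (if k = a \<and> i = b then 1 else 0) * elem_entry a b (elem_inv_param a b 0) l j
        + - (if l = a \<and> j = b then 1 else 0) * elem_entry a b (elem_inv_param a b 0) k i = rho_deriv a b w c"
      by (auto simp: sym rho_deriv_def elem_entry_def elem_inv_param_def UNIV_bool)
    ultimately show ?thesis by (simp add: sym curve_rho_def)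
  next
    case mixed
    then have "curve_rho a b t w c = 0" for t
      by (auto simp: curve_rho_def split: sum.splits prod.splits)
    moreover have "rho_deriv a b w c = 0"
      using mixed by (auto simp: rho_deriv_def intro!: sum.neutral)
    ultimately show ?thesis by simp
  qed
qed

lemma prod_curve_rho_0_other_slots:
  assumes m: "m < length bs" and cs: "length cs = length bs"
  shows "(\<Prod>m'\<in>{..<length bs} - {m}. curve_rho a b 0 (bs!m') (cs!m')) =
    (if cs = bs[m := cs!m] then 1 else 0)"
proof (cases "cs = bs[m := cs!m]")
  case True
  then have "\<forall>m'\<in>{..<length bs} - {m}. bs!m' = cs!m'"
    by (metis DiffE insertCI nth_list_update_neq)
  then show ?thesis using True by (simp add: curve_rho_0)
next
  case False
  have "\<exists>m'\<in>{..<length bs} - {m}. bs!m' \<noteq> cs!m'"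
  proof (rule ccontr)
    assume "\<not> ?thesis"
    then have "cs = bs[m := cs!m]" using cs m by (auto simp: list_eq_iff_nth_eq nth_list_update)
    with False show False by simp
  qed
  then show ?thesis using False by (simp add: curve_rho_0 prod_zero_iff)
qed

lemma sum_lists_single_slot:
  fixes x :: "'n::finite widx list \<Rightarrow> complex"
  assumes m: "m < length bs"
  shows "(\<Sum>cs\<in>{cs. length cs = length bs}.
      f (cs!m) * (\<Prod>m'\<in>{..<length bs} - {m}. curve_rho a b 0 (bs!m') (cs!m')) * x cs) =
    (\<Sum>c\<in>UNIV. f c * x (bs[m := c]))"
proof -
  define upd where "upd c = bs[m := c]" for c
  have fin: "finite {cs :: 'n widx list. length cs = length bs}"
    using finite_lists_length_eq[of "UNIV :: 'n widx set" "length bs"] by simp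
  have inj: "inj upd" unfolding upd_def inj_on_def using m by (metis nth_list_update_eq)
  have "(\<Sum>cs\<in>{cs. length cs = length bs}.
      f (cs!m) * (\<Prod>m'\<in>{..<length bs} - {m}. curve_rho a b 0 (bs!m') (cs!m')) * x cs) =
    (\<Sum>cs\<in>range upd. f (cs!m) * x cs)"
  proof (rule sum.mono_neutral_cong_right[OF fin])
    show "range upd \<subseteq> {cs. length cs = length bs}" unfolding upd_def by auto
  next
    show "\<forall>cs\<in>{cs. length cs = length bs} - range upd.
        f (cs!m) * (\<Prod>m'\<in>{..<length bs} - {m}. curve_rho a b 0 (bs!m') (cs!m')) * x cs = 0"
    proof
      fix cs assume cs: "cs \<in> {cs. length cs = length bs} - range upd"
      then have "cs \<noteq> bs[m := cs!m]" unfolding upd_def by auto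
      with cs show "f (cs!m) * (\<Prod>m'\<in>{..<length bs} - {m}. curve_rho a b 0 (bs!m') (cs!m')) * x cs = 0"
        using prod_curve_rho_0_other_slots[OF m, of cs] by simp
    qed
  next
    fix cs assume "cs \<in> range upd"
    then show "f (cs!m) * (\<Prod>m'\<in>{..<length bs} - {m}. curve_rho a b 0 (bs!m') (cs!m')) * x cs =
        f (cs!m) * x cs"
      using prod_curve_rho_0_other_slots[OF m, of cs] m unfolding upd_def by auto
  qed
  also have "\<dots> = (\<Sum>c\<in>UNIV. f (upd c ! m) * x (upd c))"
    by (simp add: sum.reindex[OF inj])
  also have "\<dots> = (\<Sum>c\<in>UNIV. f c * x (bs[m := c]))"
    using m by (simp add: upd_def)
  finally show ?thesis .
qed

lemma sum_rho_deriv_update: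
  fixes x :: "'n::finite widx list \<Rightarrow> complex"
  shows "(\<Sum>c\<in>UNIV. rho_deriv a b w c * x (bs[m := c])) =
    (\<Sum>s\<in>UNIV. if wedge_idx w \<and> widx_comp w s = a then x (bs[m := widx_upd w s b]) else 0) -
    (\<Sum>s\<in>UNIV. if \<not> wedge_idx w \<and> widx_comp w s = b then x (bs[m := widx_upd w s a]) else 0)"
proof -
  have delta: "(\<Sum>c\<in>UNIV. (if P \<and> c = v then 1 else 0) * x (bs[m := c])) = (if P then x (bs[m := v]) else 0)"
    for P and v :: "'n widx"
    by (cases P) (simp_all add: if_distrib[of "\<lambda>r. r * _"] cong: if_cong)
  have "(\<Sum>c\<in>UNIV. rho_deriv a b w c * x (bs[m := c])) =
      (\<Sum>s\<in>UNIV. \<Sum>c\<in>UNIV. (if (wedge_idx w \<and> widx_comp w s = a) \<and> c = widx_upd w s b then 1 else 0) * x (bs[m := c])) -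
      (\<Sum>s\<in>UNIV. \<Sum>c\<in>UNIV. (if (\<not> wedge_idx w \<and> widx_comp w s = b) \<and> c = widx_upd w s a then 1 else 0) * x (bs[m := c]))"
    unfolding rho_deriv_def
    by (simp add: left_diff_distrib sum_distrib_right sum_subtractf conj_assoc sum.swap[of _ UNIV "UNIV :: bool set"])
  then show ?thesis by (simp only: delta)
qed

lemma invariant_polar_op_balance:
  fixes x :: "'n::finite widx list \<Rightarrow> complex"
  assumes inv: "\<forall>g :: complex^'n^'n. invertible g \<longrightarrow> ext_act g x = x"
  shows "polar_op True a b x = polar_op False b a x"
proof
  fix bs :: "'n widx list"
  define N where "N = length bs"
  define S where "S = {cs :: 'n widx list. length cs = N}"
  define F where "F t = (\<Sum>cs\<in>S. (\<Prod>m<N. curve_rho a b t (bs!m) (cs!m)) * x cs)" for t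
  define D where "D = (\<Sum>cs\<in>S. (\<Sum>m<N. rho_deriv a b (bs!m) (cs!m) *
    (\<Prod>m'\<in>{..<N} - {m}. curve_rho a b 0 (bs!m') (cs!m'))) * x cs)"
  have F_deriv: "(F has_field_derivative D) (at 0)"
    unfolding F_def D_def
    by (intro DERIV_sum DERIV_cmult_right has_field_derivative_prod curve_rho_deriv)
  have F_const: "eventually (\<lambda>t. F t = x bs) (nhds 0)"
  proof (rule eventually_mono[OF eventually_nhds_ball[of 1 "0::complex"]])
    fix t :: complex assume "t \<in> ball 0 1"
    then have t: "t \<noteq> -1" by auto
    have "ext_act (elem_curve a b t) x = x" using inv invertible_elem_curve[OF t] by blast
    then have "ext_act (elem_curve a b t) x bs = x bs" by simp
    then show "F t = x bs" unfolding F_def S_def N_def ext_act_def by (simp add: rhoW_elem_curve[OF t])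
  qed simp
  have "((\<lambda>t. x bs) has_field_derivative D) (at 0)"
    using F_deriv DERIV_cong_ev[OF refl F_const refl] by simp
  then have "D = 0" using DERIV_unique DERIV_const by blast
  moreover have "D = (\<Sum>m<N. \<Sum>cs\<in>S.
      rho_deriv a b (bs!m) (cs!m) * (\<Prod>m'\<in>{..<N} - {m}. curve_rho a b 0 (bs!m') (cs!m')) * x cs)"
    unfolding D_def by (simp add: sum_distrib_right sum.swap[of _ S])
  also have "\<dots> = (\<Sum>m<N. \<Sum>c\<in>UNIV. rho_deriv a b (bs!m) c * x (bs[m := c]))"
    unfolding S_def N_def by (intro sum.cong refl sum_lists_single_slot) simp
  also have "\<dots> = polar_op True a b x bs - polar_op False b a x bs"
    unfolding sum_rho_deriv_update polar_op_def N_def by (simp add: sum_subtractf)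
  ultimately show "polar_op True a b x bs = polar_op False b a x bs" by simp
qed

lemma invariant_vanishes_in_positive_degree:
  fixes x :: "'n::finite widx list \<Rightarrow> complex"
  assumes alt: "ext_alg_elem x" and inv: "\<forall>g :: complex^'n^'n. invertible g \<longrightarrow> ext_act g x = x"
    and "bs \<noteq> []"
  shows "x bs = 0"
proof (rule ccontr)
  assume nz: "x bs \<noteq> 0"
  define p where "p = slot_count True bs"
  define q where "q = slot_count False bs"
  have balance: "polar_op True a b x = polar_op False b a x" for a b
    using invariant_polar_op_balance[OF inv] .
  have "2 * of_nat p * x bs = (\<Sum>a\<in>UNIV. polar_op True a a x bs)"
    by (simp add: polar_op_trace p_def)
  also have "\<dots> = (\<Sum>a\<in>UNIV. polar_op False a a x bs)"
    by (simp add: balance)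
  also have "\<dots> = 2 * of_nat q * x bs"
    by (simp add: polar_op_trace q_def)
  finally have "p = q" using nz by simp
  have "(\<Sum>a\<in>UNIV. \<Sum>b\<in>UNIV. polar_op True a b (polar_op True b a x) bs) =
      (\<Sum>a\<in>UNIV. \<Sum>b\<in>UNIV. polar_op True a b (polar_op False a b x) bs)"
    by (simp add: balance)
  also have "\<dots> = (\<Sum>a\<in>UNIV. \<Sum>b\<in>UNIV. polar_op False a b (polar_op True a b x) bs)"
    by (simp add: polar_op_commute)
  also have "\<dots> = (\<Sum>a\<in>UNIV. \<Sum>b\<in>UNIV. polar_op False a b (polar_op False b a x) bs)"
    by (simp add: balance)
  finally have "of_nat p * (of_nat CARD('n) - 1) * x bs = of_nat q * (of_nat CARD('n) + 1) * x bs"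
    by (simp add: polar_op_casimir[OF alt] p_def q_def)
  with nz \<open>p = q\<close> have "p = 0" by (simp add: algebra_simps)
  then have "length bs = 0" using \<open>p = q\<close> slot_count_total[of bs] by (simp add: p_def q_def)
  with \<open>bs \<noteq> []\<close> show False by simp
qed

lemma ext_alg_elem_scaled_one: "ext_alg_elem (\<lambda>bs. c * ext_one bs)"
  unfolding ext_alg_elem_def ext_one_def by simp

lemma ext_act_scaled_one:
  fixes g :: "complex^'n::finite^'n"
  shows "ext_act g (\<lambda>bs. c * ext_one bs) = (\<lambda>bs. c * ext_one bs)"
proof
  fix bs :: "'n widx list"
  show "ext_act g (\<lambda>bs. c * ext_one bs) bs = c * ext_one bs"
  proof (cases "bs = []")
    case True
    then have "{cs :: 'n widx list. length cs = length bs} = {[]}" by auto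
    with True show ?thesis by (simp add: ext_act_def ext_one_def)
  next
    case False
    then show ?thesis unfolding ext_act_def ext_one_def by (auto intro!: sum.neutral)
  qed
qed

theorem theorem5p3:
  fixes x :: "'n::finite widx list \<Rightarrow> complex"
  shows "(ext_alg_elem x \<and> (\<forall>g :: complex^'n^'n. invertible g \<longrightarrow> ext_act g x = x))
         \<longleftrightarrow> (\<exists>c :: complex. x = (\<lambda>bs. c * ext_one bs))"
proof
  assume "ext_alg_elem x \<and> (\<forall>g :: complex^'n^'n. invertible g \<longrightarrow> ext_act g x = x)"
  then have "x = (\<lambda>bs. x [] * ext_one bs)"
    using invariant_vanishes_in_positive_degree[of x] by (auto simp: ext_one_def)
  then show "\<exists>c. x = (\<lambda>bs. c * ext_one bs)" by blast
next
  assume "\<exists>c. x = (\<lambda>bs. c * ext_one bs)"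
  then show "ext_alg_elem x \<and> (\<forall>g :: complex^'n^'n. invertible g \<longrightarrow> ext_act g x = x)"
    using ext_alg_elem_scaled_one ext_act_scaled_one by blast
qed

end
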